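(* Let $d\ge 3$, $\lambda>0$ with $\log d\lesssim\lambda\lesssim d$, $\rho_0=\log^{-c_0}d$ for a constant $c_0>0$, $\mu=\rho_0/(d+\lambda)$, and let $(a,b,c)$ solve \[ \dot a=a(24-16a-8r),\quad \dot b=8(1+\lambda)(1-r)b-16(1+\lambda)^2b^2,\quad \dot c=8(1-r)c-16c^2, \] with $r=a+(1+\lambda)b+(d-2)c$ and $a(0)=b(0)=c(0)=\mu$. Let $C=(d-2)c$, fix $\rho\in(0,1/12)$ and $\varepsilon\in(0,1/4]$, and define $T_{1a}=\inf\{t\ge0:r(t)\ge\rho\}$, $T_1=\inf\{t\ge T_{1a}:\dot b(t)\le0\}$, $T_{2a}=\inf\{t\ge T_1: r(t)\ge 1-\varepsilon\}$. Then, for $d$ large enough: (1) $T_{2a}-T_1=\Theta(\log(1/\rho_0))=\Theta(\log\log d)$; (2) $C(T_{2a})\ge\frac23-\varepsilon-o(1)$, and hence $c(T_{2a})=\Theta(1/d)$; (3) $a(T_{2a})=\mu\,\rho_0^{-O(1)}=\frac{\log^{O(1)}d}{d+\lambda}=o(1)$; (4) $\mathrm{Align}(T_{2a})\le O(\sqrt d\,a(T_{2a}))=o(1)$.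
   Context: This ODE is the population gradient flow of the phase-retrieval model $y=(x^\top w_\star)^2+\nu$, $x\sim\mathcal N(0,I_d+\lambda vv^\top)$ ($v\perp w_\star$ unit vectors), with network $f_W(x)=\sum_{j=1}^d(w_j^\top x)^2$, in the coordinates $WW^\top=a\,w_\star w_\star^\top+b\,vv^\top+c(I-w_\star w_\star^\top-vv^\top)$, started from $WW^\top=\mu I_d$. The alignment is $\mathrm{Align}(t)=a(t)/\sqrt{a(t)^2+b(t)^2+(d-2)c(t)^2}$. Asymptotic notation refers to $d\to\infty$ with $\varepsilon,\rho$ fixed. *)

theory Defs
  imports "HOL-Analysis.Analysis" "HOL-Library.Landau_Symbols"
begin

definition rsum :: "nat \<Rightarrow> real \<Rightarrow> real \<Rightarrow> real \<Rightarrow> real \<Rightarrow> real" where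
  "rsum d lam a b c = a + (1 + lam) * b + (real d - 2) * c"

definition adot :: "nat \<Rightarrow> real \<Rightarrow> real \<Rightarrow> real \<Rightarrow> real \<Rightarrow> real" where
  "adot d lam a b c = a * (24 - 16 * a - 8 * rsum d lam a b c)"

definition bdot :: "nat \<Rightarrow> real \<Rightarrow> real \<Rightarrow> real \<Rightarrow> real \<Rightarrow> real" where
  "bdot d lam a b c = 8 * (1 + lam) * (1 - rsum d lam a b c) * b - 16 * (1 + lam)^2 * b^2"

definition cdot :: "nat \<Rightarrow> real \<Rightarrow> real \<Rightarrow> real \<Rightarrow> real \<Rightarrow> real" where
  "cdot d lam a b c = 8 * (1 - rsum d lam a b c) * c - 16 * c^2"

definition align :: "nat \<Rightarrow> real \<Rightarrow> real \<Rightarrow> real \<Rightarrow> real" where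
  "align d a b c = a / sqrt (a^2 + b^2 + (real d - 2) * c^2)"

definition rho0 :: "real \<Rightarrow> nat \<Rightarrow> real" where
  "rho0 c0 d = ln (real d) powr (- c0)"

definition mu0 :: "real \<Rightarrow> real \<Rightarrow> nat \<Rightarrow> real" where
  "mu0 c0 lam d = rho0 c0 d / (real d + lam)"

definition T1a :: "nat \<Rightarrow> real \<Rightarrow> real \<Rightarrow> (real \<Rightarrow> real) \<Rightarrow> (real \<Rightarrow> real) \<Rightarrow> (real \<Rightarrow> real) \<Rightarrow> real" where
  "T1a d lam rho a b c = Inf {t. 0 \<le> t \<and> rho \<le> rsum d lam (a t) (b t) (c t)}"

definition T1 :: "nat \<Rightarrow> real \<Rightarrow> real \<Rightarrow> (real \<Rightarrow> real) \<Rightarrow> (real \<Rightarrow> real) \<Rightarrow> (real \<Rightarrow> real) \<Rightarrow> real" where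
  "T1 d lam rho a b c = Inf {t. T1a d lam rho a b c \<le> t \<and> bdot d lam (a t) (b t) (c t) \<le> 0}"

definition T2a :: "nat \<Rightarrow> real \<Rightarrow> real \<Rightarrow> real \<Rightarrow> (real \<Rightarrow> real) \<Rightarrow> (real \<Rightarrow> real) \<Rightarrow> (real \<Rightarrow> real) \<Rightarrow> real" where
  "T2a d lam rho eps a b c = Inf {t. T1 d lam rho a b c \<le> t \<and> 1 - eps \<le> rsum d lam (a t) (b t) (c t)}"

end

(*
  For one fixed, large dimension the flow is followed through three phases, with
  B = (1 + lam) b and C = (d - 2) c, so that r = a + B + C.  Initially r = rho0 is small and
  B grows at rate about 8 (1 + lam), much faster than a (rate at most 24) and C (rate at
  most 8); hence r reaches rho at T1a while a + C is still below rho/2.  Then the factor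
  1 - r - 2B, which has the sign of b', decays exponentially, so it vanishes at T1 after a
  time O(log d / (lam rho)) = O(1), and r <= 1/2 up to T1.  Afterwards, as long as
  r < 1 - eps, C grows at rate at least 4 eps from C >= (d - 2) mu, so r reaches 1 - eps
  after a time O(log(1/rho0)); conversely C grows at rate at most 8 from (d - 2) mu <= rho0
  and has to reach 1/3, which takes a time Omega(log(1/rho0)).  Over the whole time a
  grows at rate at most 24, so a(T2a) <= mu e^(24 T2a) = mu rho0^(-O(1)), and B <= 1/3
  forces C(T2a) >= 2/3 - eps - a(T2a).  All these estimates hold with constants
  independent of d for every sufficiently large d, which gives the asymptotic statements.
*)
theory Submission
  imports Defs "HOL-Real_Asymp.Real_Asymp"
begin

section \<open>Scalar differential inequalities\<close>

lemma has_real_derivative_at_if_within_atLeast: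
  assumes "(f has_real_derivative D) (at x within {s..})" and "s < x"
  shows "(f has_real_derivative D) (at x)"
  using assms at_within_interior[of x "{s..}"] by simp

lemma exp_lower_bound_if_deriv_ge:
  fixes x :: "real \<Rightarrow> real"
  assumes st: "s \<le> t" and cont: "continuous_on {s..t} x"
    and der: "\<And>y. s < y \<Longrightarrow> y < t \<Longrightarrow> \<exists>D. (x has_real_derivative D) (at y) \<and> m * x y \<le> D"
  shows "x s * exp (m * (t - s)) \<le> x t"
proof -
  let ?p = "\<lambda>y. x y * exp (- m * y)"
  have "?p s \<le> ?p t"
  proof (rule DERIV_nonneg_imp_increasing_open[OF st])
    fix y assume y: "s < y" "y < t"
    obtain D where D: "(x has_real_derivative D) (at y)" "m * x y \<le> D" using der[OF y] by blast
    have "(?p has_real_derivative (D - m * x y) * exp (- m * y)) (at y)"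
      by (rule derivative_eq_intros D refl | simp add: algebra_simps)+
    moreover have "0 \<le> (D - m * x y) * exp (- m * y)" using D(2) by simp
    ultimately show "\<exists>y'. (?p has_real_derivative y') (at y) \<and> 0 \<le> y'" by blast
  qed (intro continuous_intros cont)
  then have "x s * exp (- m * s) * exp (m * t) \<le> x t * exp (- m * t) * exp (m * t)"
    by (simp add: mult_right_mono)
  then show ?thesis by (simp add: mult.assoc exp_add[symmetric] algebra_simps)
qed

lemma exp_upper_bound_if_deriv_le:
  fixes x :: "real \<Rightarrow> real"
  assumes st: "s \<le> t" and cont: "continuous_on {s..t} x"
    and der: "\<And>y. s < y \<Longrightarrow> y < t \<Longrightarrow> \<exists>D. (x has_real_derivative D) (at y) \<and> D \<le> M * x y"
  shows "x t \<le> x s * exp (M * (t - s))"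
proof -
  have "- x s * exp (M * (t - s)) \<le> - x t"
  proof (rule exp_lower_bound_if_deriv_ge[OF st, where x = "\<lambda>y. - x y"])
    fix y assume "s < y" "y < t"
    then obtain D where "(x has_real_derivative D) (at y)" "D \<le> M * x y" using der by blast
    then show "\<exists>D. ((\<lambda>y. - x y) has_real_derivative D) (at y) \<and> M * (- x y) \<le> D"
      using DERIV_minus by fastforce
  qed (intro continuous_intros cont)
  then show ?thesis by simp
qed

lemma le_if_deriv_nonpos_above:
  fixes x :: "real \<Rightarrow> real"
  assumes cont: "continuous_on {s..} x" and xs: "x s \<le> K"
    and der: "\<And>y. s < y \<Longrightarrow> K < x y \<Longrightarrow> \<exists>D. (x has_real_derivative D) (at y) \<and> D \<le> 0"
    and st: "s \<le> t"
  shows "x t \<le> K"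
proof (rule ccontr)
  assume "\<not> x t \<le> K"
  then have xt: "K < x t" by simp
  define S where "S = {s..t} \<inter> x -` {..K}"
  have "closed S" unfolding S_def
    by (rule continuous_closed_preimage[OF continuous_on_subset[OF cont]]) auto
  moreover have "s \<in> S" using xs st by (auto simp: S_def)
  moreover have bS: "bdd_above S" by (auto simp: S_def bdd_above_def)
  ultimately have "Sup S \<in> S" using closed_contains_Sup by blast
  then have \<sigma>: "s \<le> Sup S" "Sup S \<le> t" "x (Sup S) \<le> K" by (auto simp: S_def)
  \<comment> \<open>after the last time in \<open>[s, t]\<close> at which \<open>x \<le> K\<close>, \<open>x\<close> can only decrease\<close>
  have above: "K < x y" if "Sup S < y" "y \<le> t" for y
    using that cSup_upper[OF _ bS, of y] \<sigma> by (force simp: S_def)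
  have "x t \<le> x (Sup S)"
  proof (rule DERIV_nonpos_imp_decreasing_open[OF \<sigma>(2)])
    show "continuous_on {Sup S..t} x" by (rule continuous_on_subset[OF cont]) (use \<sigma> in auto)
  next
    fix y assume "Sup S < y" "y < t"
    then show "\<exists>D. (x has_real_derivative D) (at y) \<and> D \<le> 0" using der above \<sigma> by auto
  qed
  with \<sigma> xt show False by simp
qed

lemma first_hitting_time:
  fixes f :: "real \<Rightarrow> real"
  assumes cont: "continuous_on {s..} f" and fs: "f s < K" and t0: "s \<le> t0" "K \<le> f t0"
  defines "T \<equiv> Inf {t. s \<le> t \<and> K \<le> f t}"
  shows "s < T" "T \<le> t0" "f T = K" "\<And>y. s \<le> y \<Longrightarrow> y < T \<Longrightarrow> f y < K"
proof -
  define S where "S = {t. s \<le> t \<and> K \<le> f t}"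
  have "S = {s..} \<inter> f -` {K..}" by (auto simp: S_def)
  then have clS: "closed S" by (simp add: continuous_closed_preimage[OF cont])
  have ne: "S \<noteq> {}" using t0 by (auto simp: S_def)
  have bb: "bdd_below S" by (auto simp: S_def bdd_below_def)
  have "T \<in> S" unfolding T_def S_def[symmetric] by (rule closed_contains_Inf[OF ne bb clS])
  then have sT: "s \<le> T" and KT: "K \<le> f T" by (auto simp: S_def)
  show "T \<le> t0" unfolding T_def S_def[symmetric] by (rule cInf_lower) (use t0 bb in \<open>auto simp: S_def\<close>)
  show below: "f y < K" if "s \<le> y" "y < T" for y
    using that cInf_lower[OF _ bb, of y] unfolding T_def S_def[symmetric] by (force simp: S_def)
  show "s < T" using sT KT fs by (cases "s = T") auto
  obtain z where z: "s \<le> z" "z \<le> T" "f z = K"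
    using IVT'[of f s K T] fs KT sT continuous_on_subset[OF cont] by force
  with below[of z] show "f T = K" by force
qed

lemma pos_if_deriv_eq_mult:
  fixes x g :: "real \<Rightarrow> real"
  assumes contx: "continuous_on {0..} x" and x0: "0 < x 0" and contg: "continuous_on {0..} g"
    and der: "\<And>y. 0 < y \<Longrightarrow> (x has_real_derivative x y * g y) (at y)"
    and t: "0 \<le> t"
  shows "0 < x t"
proof (rule ccontr)
  assume "\<not> 0 < x t"
  then have "0 \<le> - x t" by simp
  from first_hitting_time[of 0 "\<lambda>y. - x y", OF _ _ t this] x0 contx
  obtain T where T: "0 < T" "x T = 0" "\<And>y. 0 \<le> y \<Longrightarrow> y < T \<Longrightarrow> 0 < x y"
    by (force intro: continuous_intros)
  obtain z where z: "\<forall>y\<in>{0..T}. g z \<le> g y"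
    using continuous_attains_inf[of "{0..T}" g] T(1) continuous_on_subset[OF contg] by force
  have "x 0 * exp (g z * (T - 0)) \<le> x T"
  proof (rule exp_lower_bound_if_deriv_ge)
    show "continuous_on {0..T} x" using contx by (rule continuous_on_subset) auto
  next
    fix y assume y: "0 < y" "y < T"
    have "g z * x y \<le> g y * x y" using z y T(3)[of y] by (intro mult_right_mono) auto
    then show "\<exists>D. (x has_real_derivative D) (at y) \<and> g z * x y \<le> D"
      using der[OF y(1)] by (auto simp: mult.commute)
  qed (use T in simp)
  moreover have "0 < x 0 * exp (g z * (T - 0))" using x0 by simp
  ultimately show False using T(2) by simp
qed

section \<open>One trajectory in fixed dimension\<close>

text \<open>While \<open>r < rho\<close>, \<open>B\<close> grows at rate at least \<open>6 (1 + L)\<close> from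
  \<open>(1 + L) mu\<close> and cannot exceed 1.  In the second phase \<open>1 - r - 2 B + q\<close>, with
  \<open>q = (d - 2) mu / (3 (1 + L))\<close>, decays at rate \<open>12 (1 + L) rho\<close> from at most \<open>1 + q\<close>
  to \<open>q\<close>.  While \<open>r < 1 - eps\<close>, \<open>C\<close> grows at rate at least \<open>4 eps\<close> from \<open>(d - 2) mu\<close>
  and cannot exceed 1.\<close>

definition phase1_bound :: "real \<Rightarrow> real \<Rightarrow> real" where
  "phase1_bound L mu = ln (1 / ((1 + L) * mu)) / (6 * (1 + L))"

definition phase2_bound :: "nat \<Rightarrow> real \<Rightarrow> real \<Rightarrow> real \<Rightarrow> real" where
  "phase2_bound d L rho mu = ln (1 + 3 * (1 + L) / ((real d - 2) * mu)) / (12 * (1 + L) * rho)"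

definition phase3_bound :: "nat \<Rightarrow> real \<Rightarrow> real \<Rightarrow> real" where
  "phase3_bound d eps mu = ln (1 / ((real d - 2) * mu)) / (4 * eps)"

text \<open>The hypotheses \<open>aC_small\<close> and \<open>a_small\<close> say that the crude growth bounds
  \<open>a t \<le> mu * exp (24 * t)\<close> and \<open>C t \<le> (d - 2) * mu * exp (8 * t)\<close> keep
  \<open>a + C \<le> rho / 2\<close> until the end of the second phase and \<open>a \<le> 1 / 12\<close> until the end
  of the third.\<close>

locale abc_trajectory =
  fixes d :: nat and L rho eps mu :: real and a b c :: "real \<Rightarrow> real"
  assumes d_ge_3: "3 \<le> d" and L_pos: "0 < L" and mu_pos: "0 < mu"
    and rho: "0 < rho" "rho < 1/12" and eps: "0 < eps" "eps \<le> 1/4"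
    and ode: "\<forall>t\<ge>0.
           (a has_real_derivative adot d L (a t) (b t) (c t)) (at t within {0..}) \<and>
           (b has_real_derivative bdot d L (a t) (b t) (c t)) (at t within {0..}) \<and>
           (c has_real_derivative cdot d L (a t) (b t) (c t)) (at t within {0..})"
    and init: "a 0 = mu" "b 0 = mu" "c 0 = mu"
    and d_large: "4 / rho \<le> real d - 2" "4 / eps \<le> real d - 2"
    and r0_small: "mu * (real d + L) < rho"
    and aC_small: "mu * exp (24 * (phase1_bound L mu + phase2_bound d L rho mu))
        + (real d - 2) * mu * exp (8 * (phase1_bound L mu + phase2_bound d L rho mu)) \<le> rho / 2"
    and a_small: "mu * exp (24 * (phase1_bound L mu + phase2_bound d L rho mu + phase3_bound d eps mu))
        \<le> 1 / 12"
begin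

abbreviation "n \<equiv> real d - 2"

definition "B t = (1 + L) * b t"
definition "C t = n * c t"
definition "r t = rsum d L (a t) (b t) (c t)"
definition "gB t = 1 - r t - 2 * B t"

abbreviation "t1a \<equiv> T1a d L rho a b c"
abbreviation "t1 \<equiv> T1 d L rho a b c"
abbreviation "t2a \<equiv> T2a d L rho eps a b c"
abbreviation "t1_bound \<equiv> phase1_bound L mu + phase2_bound d L rho mu"

lemma n_ge_1: "1 \<le> n"
  using d_ge_3 by simp

lemma r_eq: "r t = a t + B t + C t"
  by (simp add: r_def rsum_def B_def C_def)

lemma continuous_abc: "continuous_on {0..} a" "continuous_on {0..} b" "continuous_on {0..} c"
  using ode by (auto intro!: DERIV_continuous_on)

lemma continuous_BCr: "continuous_on {0..} B" "continuous_on {0..} C" "continuous_on {0..} r"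
  unfolding B_def[abs_def] C_def[abs_def] r_def[abs_def] rsum_def
  by (intro continuous_intros continuous_abc)+

lemma continuous_gB: "continuous_on {0..} gB"
  unfolding gB_def[abs_def] by (intro continuous_intros continuous_BCr)

lemma deriv_at:
  assumes "0 < y"
  shows "(a has_real_derivative adot d L (a y) (b y) (c y)) (at y)"
    and "(b has_real_derivative bdot d L (a y) (b y) (c y)) (at y)"
    and "(c has_real_derivative cdot d L (a y) (b y) (c y)) (at y)"
  using ode assms has_real_derivative_at_if_within_atLeast[OF _ assms] by auto

lemma deriv_a: "0 < y \<Longrightarrow> (a has_real_derivative a y * (24 - 16 * a y - 8 * r y)) (at y)"
  using deriv_at(1) by (simp add: adot_def r_def)

lemma deriv_b:
  "0 < y \<Longrightarrow> (b has_real_derivative b y * (8 * (1 + L) * (1 - r y) - 16 * (1 + L)^2 * b y)) (at y)"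
  using deriv_at(2) by (simp add: bdot_def r_def algebra_simps power2_eq_square)

lemma deriv_c: "0 < y \<Longrightarrow> (c has_real_derivative c y * (8 * (1 - r y) - 16 * c y)) (at y)"
  using deriv_at(3) by (simp add: cdot_def r_def algebra_simps power2_eq_square)

lemma pos_abc:
  assumes "0 \<le> t"
  shows "0 < a t" "0 < b t" "0 < c t"
proof -
  have cont: "continuous_on {0..} (\<lambda>y. 24 - 16 * a y - 8 * r y)"
    "continuous_on {0..} (\<lambda>y. 8 * (1 + L) * (1 - r y) - 16 * (1 + L)^2 * b y)"
    "continuous_on {0..} (\<lambda>y. 8 * (1 - r y) - 16 * c y)"
    by (intro continuous_intros continuous_abc continuous_BCr)+
  show "0 < a t"
    by (rule pos_if_deriv_eq_mult[OF continuous_abc(1) _ cont(1) deriv_a assms]) (use init mu_pos in simp)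
  show "0 < b t"
    by (rule pos_if_deriv_eq_mult[OF continuous_abc(2) _ cont(2) deriv_b assms]) (use init mu_pos in simp)
  show "0 < c t"
    by (rule pos_if_deriv_eq_mult[OF continuous_abc(3) _ cont(3) deriv_c assms]) (use init mu_pos in simp)
qed

lemma pos_BCr:
  assumes "0 \<le> t"
  shows "0 < B t" "0 < C t" "0 < r t"
proof -
  show B: "0 < B t" and C: "0 < C t"
    using pos_abc[OF assms] L_pos n_ge_1 by (simp_all add: B_def C_def)
  show "0 < r t" using B C pos_abc(1)[OF assms] r_eq[of t] by simp
qed

lemma le_r:
  assumes "0 \<le> t"
  shows "a t \<le> r t" "B t \<le> r t" "C t \<le> r t"
  using pos_abc[OF assms] pos_BCr[OF assms] r_eq[of t] by simp_all

lemma bdot_eq: "bdot d L (a t) (b t) (c t) = 8 * (1 + L) * b t * gB t"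
  by (simp add: bdot_def gB_def r_def B_def algebra_simps power2_eq_square)

lemma deriv_B: "0 < y \<Longrightarrow> (B has_real_derivative 8 * (1 + L) * B y * gB y) (at y)"
  unfolding B_def[abs_def] using DERIV_cmult[OF deriv_b, of y "1 + L"]
  by (simp add: gB_def B_def algebra_simps power2_eq_square)

lemma deriv_C:
  assumes "0 < y"
  shows "(C has_real_derivative 8 * C y * (1 - r y - 2 * C y / n)) (at y)"
proof -
  have "2 * C y / n = 2 * c y" using n_ge_1 by (simp add: C_def)
  then show ?thesis
    unfolding C_def[abs_def] using DERIV_cmult[OF deriv_c[OF assms], of n]
    by (simp add: C_def algebra_simps)
qed

lemma deriv_gB:
  assumes "0 < y"
  shows "(gB has_real_derivative
    - (a y * (24 - 16 * a y - 8 * r y)) - 8 * C y * (1 - r y - 2 * C y / n)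
    - 3 * (8 * (1 + L) * B y * gB y)) (at y)"
proof -
  have "gB = (\<lambda>t. 1 - a t - C t - 3 * B t)"
    by (simp add: gB_def r_eq fun_eq_iff)
  moreover have "((\<lambda>t. 1 - a t - C t - 3 * B t) has_real_derivative
    0 - (a y * (24 - 16 * a y - 8 * r y)) - 8 * C y * (1 - r y - 2 * C y / n)
    - 3 * (8 * (1 + L) * B y * gB y)) (at y)"
    by (intro DERIV_diff DERIV_const DERIV_cmult deriv_a deriv_B deriv_C assms)
  ultimately show ?thesis by simp
qed

lemma B_le_third: "0 \<le> t \<Longrightarrow> B t \<le> 1/3"
proof (rule le_if_deriv_nonpos_above[OF continuous_BCr(1)])
  have "(1 + L) * mu \<le> mu * (real d + L)" using d_ge_3 mu_pos by (simp add: algebra_simps)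
  then show "B 0 \<le> 1/3" using init r0_small rho by (simp add: B_def)
next
  fix y :: real assume y: "0 < y" "1/3 < B y"
  have "gB y \<le> 0" using le_r(2)[of y] y by (simp add: gB_def)
  then have "8 * (1 + L) * B y * gB y \<le> 0"
    using L_pos y by (simp add: mult_nonneg_nonpos)
  then show "\<exists>D. (B has_real_derivative D) (at y) \<and> D \<le> 0" using deriv_B[OF y(1)] by blast
qed

lemma a_le_exp:
  assumes t: "0 \<le> t"
  shows "a t \<le> mu * exp (24 * t)"
proof -
  have "a t \<le> a 0 * exp (24 * (t - 0))"
  proof (rule exp_upper_bound_if_deriv_le[OF t])
    show "continuous_on {0..t} a" using continuous_abc(1) by (rule continuous_on_subset) auto
  next
    fix y :: real assume y: "0 < y" "y < t"
    have "a y * (24 - 16 * a y - 8 * r y) \<le> 24 * a y"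
      using pos_abc(1)[of y] pos_BCr(3)[of y] y by (simp add: algebra_simps)
    then show "\<exists>D. (a has_real_derivative D) (at y) \<and> D \<le> 24 * a y" using deriv_a[OF y(1)] by blast
  qed
  then show ?thesis using init by simp
qed

lemma C_le_exp:
  assumes t: "0 \<le> t"
  shows "C t \<le> n * mu * exp (8 * t)"
proof -
  have "C t \<le> C 0 * exp (8 * (t - 0))"
  proof (rule exp_upper_bound_if_deriv_le[OF t])
    show "continuous_on {0..t} C" using continuous_BCr(2) by (rule continuous_on_subset) auto
  next
    fix y :: real assume y: "0 < y" "y < t"
    have "0 < C y / n" using pos_BCr(2)[of y] n_ge_1 y by simp
    then have "8 * C y * (1 - r y - 2 * C y / n) \<le> 8 * C y * 1"
      using pos_BCr[of y] y by (intro mult_left_mono) auto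
    then show "\<exists>D. (C has_real_derivative D) (at y) \<and> D \<le> 8 * C y" using deriv_C[OF y(1)] by auto
  qed
  then show ?thesis using init by (simp add: C_def)
qed

lemma C_rate_ge:
  assumes "0 \<le> y" "r y \<le> 1 - \<delta>" "4 / n \<le> \<delta>"
  shows "\<delta> / 2 \<le> 1 - r y - 2 * C y / n"
proof -
  have "0 < \<delta>" using assms(3) n_ge_1 by (smt (verit) divide_pos_pos)
  then have "C y \<le> 1" using le_r(3)[OF assms(1)] assms(2) by simp
  then have "2 * C y / n \<le> 2 / n" using n_ge_1 by (simp add: divide_right_mono)
  with assms show ?thesis by simp
qed

lemma C_ge_exp:
  assumes st: "0 \<le> s" "s \<le> t" and r_le: "\<And>y. s \<le> y \<Longrightarrow> y \<le> t \<Longrightarrow> r y \<le> 1 - \<delta>"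
    and \<delta>: "4 / n \<le> \<delta>"
  shows "C s * exp (4 * \<delta> * (t - s)) \<le> C t"
proof (rule exp_lower_bound_if_deriv_ge[OF st(2)])
  show "continuous_on {s..t} C" using continuous_BCr(2) by (rule continuous_on_subset) (use st in auto)
next
  fix y :: real assume y: "s < y" "y < t"
  then have "8 * C y * (\<delta> / 2) \<le> 8 * C y * (1 - r y - 2 * C y / n)"
    using C_rate_ge[of y \<delta>] r_le[of y] \<delta> pos_BCr(2)[of y] st by (intro mult_left_mono) auto
  then show "\<exists>D. (C has_real_derivative D) (at y) \<and> 4 * \<delta> * C y \<le> D"
    using deriv_C[of y] y st by (auto simp: algebra_simps)
qed

lemma C_ge_initial:
  assumes "0 \<le> t" and "\<And>y. 0 \<le> y \<Longrightarrow> y \<le> t \<Longrightarrow> r y \<le> 1 - rho"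
  shows "n * mu \<le> C t"
proof -
  have "4 / n \<le> rho" using d_large(1) rho n_ge_1 by (simp add: field_simps)
  then have "C 0 * exp (4 * rho * (t - 0)) \<le> C t" using assms by (intro C_ge_exp) auto
  moreover have "C 0 \<le> C 0 * exp (4 * rho * (t - 0))"
    using init n_ge_1 mu_pos assms rho by (simp add: C_def)
  ultimately show ?thesis using init by (simp add: C_def)
qed

lemma a_mono:
  assumes st: "0 \<le> s" "s \<le> t" and r_le: "\<And>y. s \<le> y \<Longrightarrow> y \<le> t \<Longrightarrow> r y \<le> 1"
  shows "a s \<le> a t"
proof (rule DERIV_nonneg_imp_increasing_open[OF st(2)])
  show "continuous_on {s..t} a" using continuous_abc(1) by (rule continuous_on_subset) (use st in auto)
next
  fix y :: real assume y: "s < y" "y < t"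
  then have "0 \<le> a y * (24 - 16 * a y - 8 * r y)"
    using le_r(1)[of y] r_le[of y] pos_abc(1)[of y] st by (intro mult_nonneg_nonneg) auto
  then show "\<exists>D. (a has_real_derivative D) (at y) \<and> 0 \<le> D" using deriv_a[of y] y st by auto
qed

lemma phase_bounds_nonneg:
  "0 \<le> phase1_bound L mu" "0 \<le> phase2_bound d L rho mu" "0 \<le> phase3_bound d eps mu"
proof -
  have "(1 + L) * mu \<le> mu * (real d + L)" "n * mu \<le> mu * (real d + L)"
    using d_ge_3 mu_pos L_pos by (simp_all add: algebra_simps)
  then have "(1 + L) * mu < 1" "n * mu < 1" using r0_small rho by simp_all
  moreover have "0 < (1 + L) * mu" "0 < n * mu" using L_pos mu_pos n_ge_1 by simp_all
  ultimately show "0 \<le> phase1_bound L mu" "0 \<le> phase3_bound d eps mu"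
    using L_pos eps by (simp_all add: phase1_bound_def phase3_bound_def)
  show "0 \<le> phase2_bound d L rho mu"
    using L_pos mu_pos n_ge_1 rho by (simp add: phase2_bound_def)
qed

lemma phase1_hit: "\<exists>t. 0 \<le> t \<and> t \<le> phase1_bound L mu \<and> rho \<le> r t"
proof (rule ccontr)
  let ?t = "phase1_bound L mu"
  assume "\<not> ?thesis"
  then have below: "\<And>y. 0 \<le> y \<Longrightarrow> y \<le> ?t \<Longrightarrow> r y < rho" by force
  have "B 0 * exp (6 * (1 + L) * (?t - 0)) \<le> B ?t"
  proof (rule exp_lower_bound_if_deriv_ge[OF phase_bounds_nonneg(1)])
    show "continuous_on {0..?t} B" using continuous_BCr(1) by (rule continuous_on_subset) auto
  next
    fix y :: real assume y: "0 < y" "y < ?t"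
    have "3/4 \<le> gB y" using below[of y] le_r(2)[of y] y rho by (simp add: gB_def)
    then have "8 * (1 + L) * B y * (3/4) \<le> 8 * (1 + L) * B y * gB y"
      using L_pos pos_BCr(1)[of y] y by (intro mult_left_mono) auto
    then show "\<exists>D. (B has_real_derivative D) (at y) \<and> 6 * (1 + L) * B y \<le> D"
      using deriv_B[OF y(1)] by (auto simp: algebra_simps)
  qed
  also have "B 0 * exp (6 * (1 + L) * (?t - 0)) = 1"
    using L_pos mu_pos init by (simp add: phase1_bound_def B_def)
  finally have "1 \<le> B ?t" .
  with le_r(2)[of ?t] below[of ?t] phase_bounds_nonneg(1) rho show False by simp
qed

lemma T1a_first_hit:
  shows "{t. 0 \<le> t \<and> rho \<le> rsum d L (a t) (b t) (c t)} \<noteq> {}"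
    and "0 < t1a" "t1a \<le> phase1_bound L mu" "r t1a = rho" "\<And>y. 0 \<le> y \<Longrightarrow> y < t1a \<Longrightarrow> r y < rho"
proof -
  obtain t where t: "0 \<le> t" "t \<le> phase1_bound L mu" "rho \<le> r t" using phase1_hit by blast
  then show "{t. 0 \<le> t \<and> rho \<le> rsum d L (a t) (b t) (c t)} \<noteq> {}" by (auto simp: r_def)
  have "r 0 < rho" using init r0_small by (simp add: r_def rsum_def algebra_simps)
  note hit = first_hitting_time[OF continuous_BCr(3) this t(1) t(3)]
  have "t1a = Inf {t. 0 \<le> t \<and> rho \<le> r t}" by (simp add: T1a_def r_def)
  with hit t(2) show "0 < t1a" "t1a \<le> phase1_bound L mu" "r t1a = rho"
    "\<And>y. 0 \<le> y \<Longrightarrow> y < t1a \<Longrightarrow> r y < rho" by auto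
qed

lemma a_plus_C_le:
  assumes t: "0 \<le> t" "t \<le> t1_bound"
  shows "a t + C t \<le> rho / 2"
proof -
  have "a t \<le> mu * exp (24 * t1_bound)" "C t \<le> n * mu * exp (8 * t1_bound)"
    using a_le_exp[OF t(1)] C_le_exp[OF t(1)] t mu_pos n_ge_1
    by (smt (verit) exp_le_cancel_iff mult_left_mono mult_pos_pos)+
  with aC_small show ?thesis by simp
qed

lemma B_T1a: "rho / 2 \<le> B t1a"
  using a_plus_C_le[of t1a] T1a_first_hit(2-4) phase_bounds_nonneg(2) r_eq[of t1a] by simp

lemma gB_T1a: "0 < gB t1a"
  using T1a_first_hit(2,4) le_r(2)[of t1a] rho by (simp add: gB_def)

lemma B_ge_while_gB_pos:
  assumes t: "t1a \<le> t" and pos: "\<And>y. t1a \<le> y \<Longrightarrow> y \<le> t \<Longrightarrow> 0 < gB y"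
  shows "rho / 2 \<le> B t"
proof -
  have "B t1a \<le> B t"
  proof (rule DERIV_nonneg_imp_increasing_open[OF t])
    show "continuous_on {t1a..t} B"
      using continuous_BCr(1) by (rule continuous_on_subset) (use T1a_first_hit(2) in auto)
  next
    fix y assume y: "t1a < y" "y < t"
    then have y0: "0 < y" using T1a_first_hit(2) by simp
    have "0 \<le> 8 * (1 + L) * B y * gB y" using pos[of y] y pos_BCr(1)[of y] y0 L_pos by simp
    then show "\<exists>D. (B has_real_derivative D) (at y) \<and> 0 \<le> D" using deriv_B[OF y0] by blast
  qed
  with B_T1a show ?thesis by simp
qed

lemma r_le_while_gB_pos:
  assumes "0 \<le> t" and pos: "\<And>y. t1a \<le> y \<Longrightarrow> y \<le> t \<Longrightarrow> 0 < gB y"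
  shows "r t \<le> 1 - rho"
proof (cases "t < t1a")
  case True
  then show ?thesis using T1a_first_hit(5)[OF assms(1)] rho by simp
next
  case False
  then show ?thesis using pos[of t] B_ge_while_gB_pos[of t, OF _ pos] by (simp add: gB_def)
qed

lemma gB_decay_while_pos:
  assumes t: "t1a \<le> t" and pos: "\<And>y. t1a \<le> y \<Longrightarrow> y \<le> t \<Longrightarrow> 0 < gB y"
  defines "q \<equiv> n * mu / (3 * (1 + L))"
  shows "gB t + q \<le> (gB t1a + q) * exp (- (12 * (1 + L) * rho) * (t - t1a))"
proof (rule exp_upper_bound_if_deriv_le[OF t])
  show "continuous_on {t1a..t} (\<lambda>y. gB y + q)"
    by (intro continuous_intros continuous_on_subset[OF continuous_gB]) (use T1a_first_hit(2) in auto)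
next
  fix y assume y: "t1a < y" "y < t"
  then have y0: "0 < y" using T1a_first_hit(2) by simp
  have r_le: "r z \<le> 1 - rho" if "0 \<le> z" "z \<le> y" for z
    using r_le_while_gB_pos[OF that(1)] pos that y by simp
  have a_rate: "0 \<le> a y * (24 - 16 * a y - 8 * r y)"
    using le_r(1)[of y] r_le[of y] pos_abc(1)[of y] y0 rho by (intro mult_nonneg_nonneg) auto
  have C_rate: "4 * rho * n * mu \<le> 8 * C y * (1 - r y - 2 * C y / n)"
  proof -
    have "rho / 2 \<le> 1 - r y - 2 * C y / n"
      using C_rate_ge[of y rho] r_le[of y] y0 d_large(1) rho n_ge_1 by (simp add: field_simps)
    moreover have "n * mu \<le> C y" using C_ge_initial[of y] r_le y0 by simp
    ultimately have "8 * (n * mu) * (rho / 2) \<le> 8 * C y * (1 - r y - 2 * C y / n)"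
      using rho n_ge_1 mu_pos pos_BCr(2)[of y] y0 by (intro mult_mono) auto
    then show ?thesis by (simp add: algebra_simps)
  qed
  have B_rate: "12 * (1 + L) * rho * gB y \<le> 3 * (8 * (1 + L) * B y * gB y)"
  proof -
    have "0 < gB y" using pos[of y] y by simp
    moreover have "rho / 2 \<le> B y" using B_ge_while_gB_pos[of y] pos y by simp
    ultimately have "rho / 2 * gB y \<le> B y * gB y" by (simp add: mult_right_mono)
    then have "24 * (1 + L) * (rho / 2 * gB y) \<le> 24 * (1 + L) * (B y * gB y)"
      using L_pos by (intro mult_left_mono) auto
    then show ?thesis by (simp add: algebra_simps)
  qed
  have "- (12 * (1 + L) * rho) * (gB y + q) = - (12 * (1 + L) * rho * gB y) - 4 * rho * n * mu"
    using L_pos unfolding q_def by (simp add: field_simps)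
  with a_rate C_rate B_rate
  have "- (a y * (24 - 16 * a y - 8 * r y)) - 8 * C y * (1 - r y - 2 * C y / n)
      - 3 * (8 * (1 + L) * B y * gB y) + 0 \<le> - (12 * (1 + L) * rho) * (gB y + q)"
    by linarith
  then show "\<exists>D. ((\<lambda>y. gB y + q) has_real_derivative D) (at y) \<and> D \<le> - (12 * (1 + L) * rho) * (gB y + q)"
    using DERIV_add[OF deriv_gB[OF y0] DERIV_const] by blast
qed

lemma phase2_hit: "\<exists>t. t1a \<le> t \<and> t \<le> t1a + phase2_bound d L rho mu \<and> gB t \<le> 0"
proof (rule ccontr)
  define t where "t = t1a + phase2_bound d L rho mu"
  define q where "q = n * mu / (3 * (1 + L))"
  assume "\<not> ?thesis"
  then have pos: "\<And>y. t1a \<le> y \<Longrightarrow> y \<le> t \<Longrightarrow> 0 < gB y" unfolding t_def by force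
  have q_pos: "0 < q" using n_ge_1 mu_pos L_pos unfolding q_def by simp
  have "12 * (1 + L) * rho * (t - t1a) = ln (1 + 1 / q)"
    using L_pos rho unfolding t_def q_def phase2_bound_def by simp
  then have decay: "exp (- (12 * (1 + L) * rho) * (t - t1a)) = q / (1 + q)"
    using q_pos by (simp add: exp_minus field_simps)
  have "gB t + q \<le> (gB t1a + q) * exp (- (12 * (1 + L) * rho) * (t - t1a))"
    unfolding q_def by (rule gB_decay_while_pos) (use pos phase_bounds_nonneg(2) in \<open>auto simp: t_def\<close>)
  also have "\<dots> = (gB t1a + q) * (q / (1 + q))" by (simp only: decay)
  also have "\<dots> \<le> (1 + q) * (q / (1 + q))"
    using pos_BCr[of t1a] T1a_first_hit(2) q_pos by (intro mult_right_mono) (auto simp: gB_def)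
  also have "\<dots> = q" using q_pos by simp
  finally have "gB t \<le> 0" by simp
  with pos[of t] phase_bounds_nonneg(2) show False unfolding t_def by simp
qed

lemma bdot_nonpos_iff: "0 \<le> t \<Longrightarrow> bdot d L (a t) (b t) (c t) \<le> 0 \<longleftrightarrow> gB t \<le> 0"
  using pos_abc(2)[of t] L_pos by (simp add: bdot_eq mult_le_0_iff)

lemma T1_first_hit:
  shows "{t. t1a \<le> t \<and> bdot d L (a t) (b t) (c t) \<le> 0} \<noteq> {}"
    and "t1a < t1" "t1 \<le> t1a + phase2_bound d L rho mu" "gB t1 = 0"
    "\<And>y. t1a \<le> y \<Longrightarrow> y < t1 \<Longrightarrow> 0 < gB y"
proof -
  let ?f = "\<lambda>t. - bdot d L (a t) (b t) (c t)"
  have t1a_pos: "0 < t1a" by (rule T1a_first_hit(2))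
  obtain t where t: "t1a \<le> t" "t \<le> t1a + phase2_bound d L rho mu" "gB t \<le> 0"
    using phase2_hit by blast
  then have ft: "0 \<le> ?f t" using bdot_nonpos_iff[of t] t1a_pos by simp
  then show "{t. t1a \<le> t \<and> bdot d L (a t) (b t) (c t) \<le> 0} \<noteq> {}" using t by auto
  have "continuous_on {0..} ?f" unfolding bdot_def rsum_def by (intro continuous_intros continuous_abc)
  then have cont: "continuous_on {t1a..} ?f" by (rule continuous_on_subset) (use t1a_pos in auto)
  have "?f t1a < 0" using bdot_nonpos_iff[of t1a] gB_T1a t1a_pos by simp
  note hit = first_hitting_time[OF cont this t(1) ft]
  have t1_eq: "t1 = Inf {t. t1a \<le> t \<and> 0 \<le> ?f t}" by (simp add: T1_def)
  show "t1a < t1" "t1 \<le> t1a + phase2_bound d L rho mu" using hit(1,2) t(2) unfolding t1_eq by auto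
  have "bdot d L (a t1) (b t1) (c t1) = 0" using hit(3) unfolding t1_eq by simp
  then show "gB t1 = 0"
    using pos_abc(2)[of t1] hit(1) t1a_pos L_pos unfolding t1_eq by (simp add: bdot_eq)
  show "0 < gB y" if "t1a \<le> y" "y < t1" for y
    using hit(4)[of y] that bdot_nonpos_iff[of y] t1a_pos unfolding t1_eq by simp
qed

lemma T1_pos: "0 < t1"
  using T1a_first_hit(2) T1_first_hit(2) by simp

lemma T1_le_t1_bound: "t1 \<le> t1_bound"
  using T1_first_hit(3) T1a_first_hit(3) by simp

lemma r_le_half_until_T1: "0 \<le> y \<Longrightarrow> y \<le> t1 \<Longrightarrow> r y \<le> 1/2"
proof (cases "y < t1a")
  case True
  assume "0 \<le> y"
  with True show ?thesis using T1a_first_hit(5)[of y] rho by simp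
next
  case False
  assume y: "0 \<le> y" "y \<le> t1"
  with False have "0 \<le> gB y"
    using T1_first_hit(4) T1_first_hit(5)[of y] by (cases "y = t1") auto
  moreover have "a y + C y \<le> rho / 2" using a_plus_C_le[of y] y T1_le_t1_bound by simp
  ultimately show ?thesis using r_eq[of y] rho by (simp add: gB_def)
qed

lemma C_T1: "n * mu \<le> C t1"
proof (rule C_ge_initial)
  show "0 \<le> t1" using T1_pos by simp
  show "r y \<le> 1 - rho" if "0 \<le> y" "y \<le> t1" for y using r_le_half_until_T1[OF that] rho by simp
qed

lemma phase3_hit: "\<exists>t. t1 \<le> t \<and> t \<le> t1 + phase3_bound d eps mu \<and> 1 - eps \<le> r t"
proof (rule ccontr)
  let ?t = "t1 + phase3_bound d eps mu"
  assume "\<not> ?thesis"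
  then have below: "\<And>y. t1 \<le> y \<Longrightarrow> y \<le> ?t \<Longrightarrow> r y < 1 - eps" by force
  have "4 / n \<le> eps" using d_large(2) eps n_ge_1 by (simp add: field_simps)
  then have "C t1 * exp (4 * eps * (?t - t1)) \<le> C ?t"
    using T1_pos phase_bounds_nonneg(3) below by (intro C_ge_exp) (auto intro: less_imp_le)
  moreover have "exp (4 * eps * (?t - t1)) = 1 / (n * mu)"
    using eps n_ge_1 mu_pos by (simp add: phase3_bound_def)
  moreover have "1 \<le> C t1 * (1 / (n * mu))" using C_T1 n_ge_1 mu_pos by (simp add: field_simps)
  moreover have "C ?t \<le> r ?t" using le_r(3) T1_pos phase_bounds_nonneg(3) by simp
  ultimately show False using below[of ?t] phase_bounds_nonneg(3) eps by simp
qed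

lemma T2a_first_hit:
  shows "{t. t1 \<le> t \<and> 1 - eps \<le> rsum d L (a t) (b t) (c t)} \<noteq> {}"
    and "t1 < t2a" "t2a \<le> t1 + phase3_bound d eps mu" "r t2a = 1 - eps"
    "\<And>y. t1 \<le> y \<Longrightarrow> y < t2a \<Longrightarrow> r y < 1 - eps"
proof -
  obtain t where t: "t1 \<le> t" "t \<le> t1 + phase3_bound d eps mu" "1 - eps \<le> r t"
    using phase3_hit by blast
  then show "{t. t1 \<le> t \<and> 1 - eps \<le> rsum d L (a t) (b t) (c t)} \<noteq> {}" by (auto simp: r_def)
  have r_t1: "r t1 < 1 - eps" using r_le_half_until_T1[of t1] T1_pos eps by simp
  have cont: "continuous_on {t1..} r"
    using continuous_BCr(3) by (rule continuous_on_subset) (use T1_pos in auto)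
  note hit = first_hitting_time[OF cont r_t1 t(1) t(3)]
  have "t2a = Inf {t. t1 \<le> t \<and> 1 - eps \<le> r t}" by (simp add: T2a_def r_def)
  with hit t(2) show "t1 < t2a" "t2a \<le> t1 + phase3_bound d eps mu" "r t2a = 1 - eps"
    "\<And>y. t1 \<le> y \<Longrightarrow> y < t2a \<Longrightarrow> r y < 1 - eps" by auto
qed

lemma r_le_1_until_T2a: "0 \<le> y \<Longrightarrow> y \<le> t2a \<Longrightarrow> r y \<le> 1"
  using r_le_half_until_T1[of y] T2a_first_hit(4) T2a_first_hit(5)[of y] eps
  by (cases "y \<le> t1"; cases "y = t2a") auto

lemma hitting_sets_nonempty:
  "{t. 0 \<le> t \<and> rho \<le> rsum d L (a t) (b t) (c t)} \<noteq> {}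
   \<and> {t. t1a \<le> t \<and> bdot d L (a t) (b t) (c t) \<le> 0} \<noteq> {}
   \<and> {t. t1 \<le> t \<and> 1 - eps \<le> rsum d L (a t) (b t) (c t)} \<noteq> {}"
  using T1a_first_hit(1) T1_first_hit(1) T2a_first_hit(1) by blast

lemma hitting_times_bounds:
  "0 < t1" "t1 \<le> t1_bound" "t1 < t2a" "t2a \<le> t1_bound + phase3_bound d eps mu"
  using T1_pos T1_le_t1_bound T2a_first_hit(2,3) by auto

lemma a_T2a_bounds: "mu \<le> a t2a" "a t2a \<le> mu * exp (24 * t2a)" "a t2a \<le> 1/12"
proof -
  have t2a_pos: "0 < t2a" using hitting_times_bounds by simp
  have "a 0 \<le> a t2a" by (rule a_mono) (use t2a_pos r_le_1_until_T2a in auto)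
  then show "mu \<le> a t2a" using init by simp
  show a_le: "a t2a \<le> mu * exp (24 * t2a)" using a_le_exp t2a_pos by simp
  also have "\<dots> \<le> mu * exp (24 * (t1_bound + phase3_bound d eps mu))"
    using hitting_times_bounds(4) mu_pos by simp
  finally show "a t2a \<le> 1/12" using a_small by simp
qed

lemma C_T2a_bounds:
  "2/3 - eps - a t2a \<le> n * c t2a" "n * c t2a \<le> 1 - eps" "1/3 \<le> n * mu * exp (8 * t2a)"
proof -
  have t2a_pos: "0 < t2a" using hitting_times_bounds by simp
  show C_ge: "2/3 - eps - a t2a \<le> n * c t2a"
    using T2a_first_hit(4) r_eq[of t2a] B_le_third[of t2a] t2a_pos by (simp add: C_def)
  show "n * c t2a \<le> 1 - eps" using le_r(3)[of t2a] t2a_pos T2a_first_hit(4) by (simp add: C_def)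
  have "n * c t2a \<le> n * mu * exp (8 * t2a)" using C_le_exp[of t2a] t2a_pos by (simp add: C_def)
  with C_ge a_T2a_bounds(3) eps show "1/3 \<le> n * mu * exp (8 * t2a)" by simp
qed

end

section \<open>Elementary estimates in the dimension\<close>

lemma divide_one_plus_le_if_le_ln:
  fixes x D k K1 L :: real
  assumes "x \<le> 3 * ln D" "1 < D" "0 < k" "0 < K1" "K1 * ln D \<le> L"
  shows "x / (k * (1 + L)) \<le> 3 / (k * K1)"
proof -
  have lnD: "0 < ln D" using assms(2) by simp
  then have L: "0 < L" using assms(4,5) by (smt (verit) mult_pos_pos)
  have "x / (k * (1 + L)) \<le> 3 * ln D / (k * (1 + L))"
    using assms(1,3) L by (simp add: divide_right_mono)
  also have "\<dots> \<le> 3 * ln D / (k * (K1 * ln D))"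
    using assms lnD L by (intro divide_left_mono mult_left_mono mult_pos_pos) auto
  also have "\<dots> = 3 / (k * K1)" using lnD by simp
  finally show ?thesis .
qed

lemma phase1_bound_le:
  fixes D L p K1 :: real
  assumes D: "1 < D" and K1: "0 < K1" "K1 * ln D \<le> L"
    and p: "0 < p" "ln (1 / p) \<le> 2 * ln D"
  shows "phase1_bound L (p / (D + L)) \<le> 1 / (2 * K1)"
proof -
  have L: "0 < L" using K1 D by (smt (verit) ln_gt_zero mult_pos_pos)
  have "L * 1 \<le> L * D" using D L by (intro mult_left_mono) auto
  then have "(D + L) / ((1 + L) * p) \<le> (1 + L) * D / ((1 + L) * p)"
    using L p by (intro divide_right_mono) (auto simp: algebra_simps)
  also have "\<dots> = D / p" using L by simp
  finally have "(D + L) / ((1 + L) * p) \<le> D / p" .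
  moreover have "0 < (D + L) / ((1 + L) * p)" using D L p by simp
  ultimately have "ln ((D + L) / ((1 + L) * p)) \<le> ln (D / p)" by simp
  also have "\<dots> = ln D + ln (1 / p)" using D p by (simp add: ln_div)
  finally have "ln (1 / ((1 + L) * (p / (D + L)))) \<le> 3 * ln D" using p by simp
  then have "ln (1 / ((1 + L) * (p / (D + L)))) / (6 * (1 + L)) \<le> 3 / (6 * K1)"
    by (rule divide_one_plus_le_if_le_ln[OF _ D _ K1]) simp
  then show ?thesis by (simp add: phase1_bound_def)
qed

lemma phase2_bound_le:
  fixes L p K1 K2 rho :: real
  assumes d: "3 \<le> d" and K1: "0 < K1" "K1 * ln (real d) \<le> L" and K2: "L \<le> K2 * real d"
    and p: "0 < p" "p < 1" "ln (10 * (1 + K2)^2) + ln (1 / p) \<le> 2 * ln (real d)"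
    and rho: "0 < rho"
  shows "phase2_bound d L rho (p / (real d + L)) \<le> 1 / (4 * K1 * rho)"
proof -
  define D where "D = real d"
  define w where "w = (1 + K2)^2 * D / p"
  have D3: "3 \<le> D" and n3: "D / 3 \<le> D - 2" using d by (simp_all add: D_def)
  have L: "0 < L" using K1 D3 unfolding D_def by (smt (verit) ln_gt_zero mult_pos_pos)
  have K2': "0 < K2" using K2 L D3 unfolding D_def by (smt (verit) mult_nonpos_nonneg)
  have LD: "1 + L \<le> (1 + K2) * D" "D + L \<le> (1 + K2) * D"
    using K2 D3 by (simp_all add: D_def algebra_simps)
  have "3 * (1 + L) / ((D - 2) * (p / (D + L))) = 3 * (1 + L) * (D + L) / ((D - 2) * p)"
    using L D3 p by simp
  also have "\<dots> \<le> 3 * ((1 + K2) * D) * ((1 + K2) * D) / ((D / 3) * p)"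
    using LD L n3 D3 p by (intro frac_le mult_mono mult_right_mono) auto
  also have "\<dots> = 9 * w" using D3 p by (simp add: w_def field_simps power2_eq_square)
  finally have "1 + 3 * (1 + L) / ((D - 2) * (p / (D + L))) \<le> 1 + 9 * w" by simp
  also have "\<dots> \<le> 10 * w"
  proof -
    have "1 * 1 \<le> (1 + K2)^2 * (D / p)" using K2' D3 p by (intro mult_mono) auto
    then have "1 \<le> w" by (simp add: w_def)
    then show ?thesis by simp
  qed
  finally have "ln (1 + 3 * (1 + L) / ((D - 2) * (p / (D + L)))) \<le> ln (10 * w)"
    using L D3 p by (intro ln_mono) (auto intro!: add_pos_nonneg)
  also have "\<dots> = ln (10 * (1 + K2)^2) + ln D + ln (1 / p)"
    using K2' D3 p by (simp add: w_def ln_div ln_mult)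
  finally have "ln (1 + 3 * (1 + L) / ((D - 2) * (p / (D + L)))) \<le> 3 * ln D"
    using p(3) unfolding D_def by simp
  from divide_one_plus_le_if_le_ln[OF this _ _ K1[unfolded D_def[symmetric]], of "12 * rho"] D3 rho
  show ?thesis by (simp add: phase2_bound_def D_def mult_ac)
qed

lemma phase3_bound_le:
  fixes L p K2 eps :: real
  assumes d: "3 \<le> d" and L: "0 < L" "L \<le> K2 * real d" and p: "0 < p" and eps: "0 < eps"
  shows "phase3_bound d eps (p / (real d + L)) \<le> (ln (3 * (1 + K2)) + ln (1 / p)) / (4 * eps)"
proof -
  define D where "D = real d"
  have D3: "3 \<le> D" and n3: "D / 3 \<le> D - 2" using d by (simp_all add: D_def)
  have K2: "0 < K2" using L D3 unfolding D_def by (smt (verit) mult_nonpos_nonneg)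
  have "1 / ((D - 2) * (p / (D + L))) = (D + L) / ((D - 2) * p)" using L D3 by simp
  also have "\<dots> \<le> ((1 + K2) * D) / ((D / 3) * p)"
    using L n3 D3 p by (intro frac_le mult_right_mono) (auto simp: D_def algebra_simps)
  also have "\<dots> = 3 * (1 + K2) / p" using D3 p by (simp add: field_simps)
  finally have "ln (1 / ((D - 2) * (p / (D + L)))) \<le> ln (3 * (1 + K2) / p)"
    using L D3 p by (intro ln_mono) auto
  also have "\<dots> = ln (3 * (1 + K2)) + ln (1 / p)" using K2 p by (simp add: ln_div)
  finally show ?thesis using eps by (simp add: phase3_bound_def D_def divide_right_mono)
qed

lemma eq_mult_powr_log_ratio:
  fixes x m p :: real
  assumes "0 < x" "0 < m" "0 < p" "p \<noteq> 1"
  shows "x = m * p powr (- (ln (x / m) / ln (1 / p)))"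
proof -
  have "ln p \<noteq> 0" using assms(3,4) by simp
  then have "p powr (- (ln (x / m) / ln (1 / p))) = x / m"
    using assms by (simp add: powr_def ln_div exp_diff)
  then show ?thesis using assms(2) by simp
qed

lemma mu0_mult_rho0_powr:
  "mu0 c0 L d * rho0 c0 d powr (- h) = ln (real d) powr (c0 * (h - 1)) / (real d + L)"
  by (simp add: mu0_def rho0_def powr_powr powr_add[symmetric] algebra_simps)

lemma align_le_sqrt_mult:
  assumes d: "3 \<le> d" and x: "0 \<le> x" and z: "1/3 \<le> (real d - 2) * z"
  shows "0 \<le> align d x y z" "align d x y z \<le> 3 * sqrt (real d) * x"
proof -
  define n where "n = real d - 2"
  have n: "0 < n" "n \<le> real d" using d by (simp_all add: n_def)
  have "0 < n * z" using z by (simp add: n_def)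
  then have z0: "0 < z" using n by (simp add: zero_less_mult_iff)
  have "sqrt n * z = sqrt (n * z^2)" using n z0 by (simp add: real_sqrt_mult)
  also have "\<dots> \<le> sqrt (x^2 + y^2 + n * z^2)" by simp
  finally have S: "sqrt n * z \<le> sqrt (x^2 + y^2 + n * z^2)" .
  have S0: "0 < sqrt n * z" using n z0 by simp
  have align: "align d x y z = x / sqrt (x^2 + y^2 + n * z^2)" by (simp add: align_def n_def)
  show "0 \<le> align d x y z" unfolding align using x n by simp
  have "align d x y z \<le> x / (sqrt n * z)" unfolding align by (rule frac_le[OF x order_refl S0 S])
  also have "\<dots> \<le> 3 * sqrt n * x"
  proof -
    have "3 * sqrt n * (sqrt n * z) = 3 * ((sqrt n)^2 * z)" by (simp add: power2_eq_square algebra_simps)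
    also have "\<dots> = 3 * (n * z)" using n by simp
    finally have "3 * sqrt n * (sqrt n * z) = 3 * (n * z)" .
    moreover have "1/3 \<le> n * z" using z by (simp add: n_def)
    ultimately have "1 \<le> 3 * sqrt n * (sqrt n * z)" by linarith
    then have "x * 1 \<le> x * (3 * sqrt n * (sqrt n * z))" using x by (intro mult_left_mono)
    then show ?thesis using S0 by (simp add: divide_le_eq algebra_simps)
  qed
  also have "\<dots> \<le> 3 * sqrt (real d) * x" using n x by (simp add: mult_right_mono)
  finally show "align d x y z \<le> 3 * sqrt (real d) * x" .
qed

section \<open>Asymptotics as the dimension grows\<close>

locale abc_trajectory_family =
  fixes lam :: "nat \<Rightarrow> real" and c0 rho eps K1 K2 :: real and a b c :: "nat \<Rightarrow> real \<Rightarrow> real"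
  assumes c0: "0 < c0" and rho: "0 < rho" "rho < 1/12" and eps: "0 < eps" "eps \<le> 1/4"
    and K: "0 < K1" "0 < K2"
    and lam_range: "eventually (\<lambda>d. K1 * ln (real d) \<le> lam d \<and> lam d \<le> K2 * real d) at_top"
    and ode: "\<forall>d\<ge>3. \<forall>t\<ge>0.
           (a d has_real_derivative adot d (lam d) (a d t) (b d t) (c d t)) (at t within {0..}) \<and>
           (b d has_real_derivative bdot d (lam d) (a d t) (b d t) (c d t)) (at t within {0..}) \<and>
           (c d has_real_derivative cdot d (lam d) (a d t) (b d t) (c d t)) (at t within {0..})"
    and init: "\<forall>d\<ge>3. a d 0 = mu0 c0 (lam d) d \<and> b d 0 = mu0 c0 (lam d) d \<and> c d 0 = mu0 c0 (lam d) d"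
begin

abbreviation "mu d \<equiv> mu0 c0 (lam d) d"
abbreviation "ell d \<equiv> ln (1 / rho0 c0 d)"
abbreviation "t1 d \<equiv> T1 d (lam d) rho (a d) (b d) (c d)"
abbreviation "t2a d \<equiv> T2a d (lam d) rho eps (a d) (b d) (c d)"

definition "t1_const = 1 / (2 * K1) + 1 / (4 * K1 * rho)"
definition "phase3_const = ln (3 * (1 + K2))"
definition "duration_const = t1_const + (phase3_const + 1) / (4 * eps)"
definition "a_bound d =
  exp (24 * t1_const + 6 * phase3_const / eps) * (ln (real d) powr (6 * c0 / eps) / real d)"

definition large_dim :: "nat \<Rightarrow> bool" where
  "large_dim d \<longleftrightarrow> 3 \<le> d \<and> K1 * ln (real d) \<le> lam d \<and> lam d \<le> K2 * real d
     \<and> ln (10 * (1 + K2)^2) + ell d \<le> 2 * ln (real d)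
     \<and> rho0 c0 d * (exp (24 * t1_const) + exp (8 * t1_const)) < rho / 2
     \<and> 4 / rho \<le> real d - 2 \<and> 4 / eps \<le> real d - 2
     \<and> a_bound d < 1/12
     \<and> max 1 (2 * ln 3 + 16 * t1_const) \<le> ell d"

lemma constants_nonneg: "0 \<le> t1_const" "0 \<le> phase3_const"
  using K rho by (simp_all add: t1_const_def phase3_const_def)

lemma ell_eq: "3 \<le> d \<Longrightarrow> ell d = c0 * ln (ln (real d))"
  by (simp add: rho0_def ln_div)

lemma eventually_large_dim: "eventually large_dim at_top"
proof -
  have "((\<lambda>d. rho0 c0 d * (exp (24 * t1_const) + exp (8 * t1_const))) \<longlongrightarrow> 0) at_top"
    unfolding rho0_def using c0 by (intro tendsto_mult_left_zero) real_asymp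
  then have ev_rho0:
    "eventually (\<lambda>d. rho0 c0 d * (exp (24 * t1_const) + exp (8 * t1_const)) < rho / 2) at_top"
    by (rule order_tendstoD) (use rho in simp)
  have "(a_bound \<longlongrightarrow> 0) at_top"
    unfolding a_bound_def by (intro tendsto_mult_right_zero) real_asymp
  then have ev_a: "eventually (\<lambda>d. a_bound d < 1/12) at_top" by (rule order_tendstoD) simp
  have "filterlim (\<lambda>d::nat. c0 * ln (ln (real d))) at_top at_top" using c0 by real_asymp
  then have ev_ell: "eventually (\<lambda>d::nat. max 1 (2 * ln 3 + 16 * t1_const) \<le> c0 * ln (ln (real d))) at_top"
    unfolding filterlim_at_top by blast
  have ev_ln: "eventually (\<lambda>d::nat. ln (10 * (1 + K2)^2) + c0 * ln (ln (real d)) \<le> 2 * ln (real d)) at_top"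
    using K c0 by real_asymp
  have ev_d: "eventually (\<lambda>d::nat. 4 / rho \<le> real d - 2 \<and> 4 / eps \<le> real d - 2) at_top"
    using rho eps by (intro eventually_conj) real_asymp+
  show ?thesis
    using eventually_ge_at_top[of 3] lam_range ev_ln ev_rho0 ev_d ev_a ev_ell
    by eventually_elim (simp add: large_dim_def ell_eq)
qed

lemma large_dim_rho0: "large_dim d \<Longrightarrow> 0 < rho0 c0 d \<and> rho0 c0 d < rho / 4"
proof -
  assume g: "large_dim d"
  then have p: "0 < rho0 c0 d" by (simp add: large_dim_def rho0_def)
  have "2 \<le> exp (24 * t1_const) + exp (8 * t1_const)"
    using constants_nonneg(1) by (smt (verit) one_le_exp_iff)
  then have "rho0 c0 d * 2 \<le> rho0 c0 d * (exp (24 * t1_const) + exp (8 * t1_const))"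
    using p by (intro mult_left_mono) auto
  moreover have "rho0 c0 d * (exp (24 * t1_const) + exp (8 * t1_const)) < rho / 2"
    using g by (simp add: large_dim_def)
  ultimately have "rho0 c0 d < rho / 4" by linarith
  with p show ?thesis by simp
qed

lemma large_dim_phase_bounds:
  assumes "large_dim d"
  shows "phase1_bound (lam d) (mu d) + phase2_bound d (lam d) rho (mu d) \<le> t1_const"
    and "phase3_bound d eps (mu d) \<le> (phase3_const + ell d) / (4 * eps)"
proof -
  have d: "3 \<le> d" "1 < real d" and lam: "K1 * ln (real d) \<le> lam d" "lam d \<le> K2 * real d"
    and ln_ell: "ln (10 * (1 + K2)^2) + ell d \<le> 2 * ln (real d)"
    using assms by (auto simp: large_dim_def)
  have p: "0 < rho0 c0 d" "rho0 c0 d < 1" using large_dim_rho0[OF assms] rho by auto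
  have "1 \<le> (1 + K2)^2" using K by (simp add: one_le_power)
  then have "0 \<le> ln (10 * (1 + K2)^2)" by simp
  then have "ell d \<le> 2 * ln (real d)" using ln_ell by simp
  from phase1_bound_le[OF d(2) K(1) lam(1) p(1) this] phase2_bound_le[OF d(1) K(1) lam p ln_ell rho(1)]
  show "phase1_bound (lam d) (mu d) + phase2_bound d (lam d) rho (mu d) \<le> t1_const"
    by (simp add: mu0_def t1_const_def)
  have "0 < lam d" using lam(1) K(1) d(2) by (smt (verit) ln_gt_zero mult_pos_pos)
  from phase3_bound_le[OF d(1) this lam(2) p(1) eps(1)]
  show "phase3_bound d eps (mu d) \<le> (phase3_const + ell d) / (4 * eps)"
    by (simp add: mu0_def phase3_const_def)
qed

lemma large_dim_lam_pos: "large_dim d \<Longrightarrow> 0 < lam d"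
proof -
  assume "large_dim d"
  then have "3 \<le> real d" "K1 * ln (real d) \<le> lam d" by (simp_all add: large_dim_def)
  moreover have "0 < ln (real d)" using calculation(1) by simp
  ultimately show "0 < lam d" using K(1) by (smt (verit) mult_pos_pos)
qed

lemma large_dim_mu_pos: "large_dim d \<Longrightarrow> 0 < mu d"
  using large_dim_rho0[of d] large_dim_lam_pos[of d] by (simp add: mu0_def add_nonneg_pos)

lemma mu_exp_le_a_bound:
  assumes g: "large_dim d" and t: "t \<le> t1_const + (phase3_const + ell d) / (4 * eps)"
  shows "mu d * exp (24 * t) \<le> a_bound d"
proof -
  have d: "3 \<le> d" using g by (simp add: large_dim_def)
  have p: "0 < rho0 c0 d" "rho0 c0 d \<le> 1" using large_dim_rho0[OF g] rho by auto
  have mu: "0 \<le> mu d" "mu d \<le> 1 / real d"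
    using p d large_dim_lam_pos[OF g] by (auto simp: mu0_def intro!: frac_le)
  have "exp (24 * t) \<le> exp (24 * t1_const + 6 * phase3_const / eps + (6 / eps) * ell d)"
    using t eps by (simp add: field_simps)
  also have "\<dots> = exp (24 * t1_const + 6 * phase3_const / eps) * ln (real d) powr (6 * c0 / eps)"
    using d by (simp add: exp_add ell_eq powr_def)
  finally have "mu d * exp (24 * t)
      \<le> 1 / real d * (exp (24 * t1_const + 6 * phase3_const / eps) * ln (real d) powr (6 * c0 / eps))"
    using mu by (intro mult_mono) auto
  then show ?thesis by (simp add: a_bound_def)
qed

lemma large_dim_mu_le:
  assumes g: "large_dim d"
  shows "mu d \<le> rho0 c0 d" "(real d - 2) * mu d \<le> rho0 c0 d"
proof -
  have d: "3 \<le> real d" using g by (simp add: large_dim_def)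
  have L: "0 < lam d" by (rule large_dim_lam_pos[OF g])
  have p: "0 < rho0 c0 d" using large_dim_rho0[OF g] by simp
  have "mu d = rho0 c0 d * (1 / (real d + lam d))"
    "(real d - 2) * mu d = rho0 c0 d * ((real d - 2) / (real d + lam d))"
    by (simp_all add: mu0_def)
  moreover have "1 / (real d + lam d) \<le> 1" "(real d - 2) / (real d + lam d) \<le> 1"
    using d L by simp_all
  ultimately show "mu d \<le> rho0 c0 d" "(real d - 2) * mu d \<le> rho0 c0 d"
    using p by (metis mult.right_neutral mult_left_mono less_imp_le)+
qed

lemma large_dim_trajectory:
  assumes g: "large_dim d"
  shows "abc_trajectory d (lam d) rho eps (mu d) (a d) (b d) (c d)"
proof -
  let ?t1_bound = "phase1_bound (lam d) (mu d) + phase2_bound d (lam d) rho (mu d)"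
  have d: "3 \<le> d" "4 / rho \<le> real d - 2" "4 / eps \<le> real d - 2"
    and a_bound: "a_bound d < 1/12"
    and p_exp: "rho0 c0 d * (exp (24 * t1_const) + exp (8 * t1_const)) < rho / 2"
    using g by (simp_all add: large_dim_def)
  have L: "0 < lam d" by (rule large_dim_lam_pos[OF g])
  have p: "0 < rho0 c0 d" "rho0 c0 d < rho / 4" using large_dim_rho0[OF g] by auto
  then have mu: "0 < mu d" "mu d * (real d + lam d) < rho" using d L by (simp_all add: mu0_def)
  note t1_bound = large_dim_phase_bounds[OF g]
  have "mu d * exp (24 * ?t1_bound) \<le> rho0 c0 d * exp (24 * t1_const)"
    using large_dim_mu_le(1)[OF g] t1_bound(1) mu(1) by (intro mult_mono) auto
  moreover have "(real d - 2) * mu d * exp (8 * ?t1_bound) \<le> rho0 c0 d * exp (8 * t1_const)"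
    using large_dim_mu_le(2)[OF g] t1_bound(1) mu(1) p(1) d(1) by (intro mult_mono) auto
  ultimately have aC:
    "mu d * exp (24 * ?t1_bound) + (real d - 2) * mu d * exp (8 * ?t1_bound) \<le> rho / 2"
    using p_exp by (simp add: algebra_simps)
  have "mu d * exp (24 * (?t1_bound + phase3_bound d eps (mu d))) \<le> a_bound d"
    using t1_bound by (intro mu_exp_le_a_bound[OF g]) simp
  with a_bound have "mu d * exp (24 * (?t1_bound + phase3_bound d eps (mu d))) \<le> 1/12" by simp
  with d L mu rho eps aC show ?thesis
    using ode init by unfold_locales auto
qed

lemma large_dim_T2a_le:
  assumes g: "large_dim d"
  shows "t2a d \<le> t1_const + (phase3_const + ell d) / (4 * eps)"
proof -
  interpret T: abc_trajectory d "lam d" rho eps "mu d" "a d" "b d" "c d"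
    by (rule large_dim_trajectory[OF g])
  show ?thesis using T.hitting_times_bounds(4) large_dim_phase_bounds[OF g] by simp
qed

lemma large_dim_T2a_minus_T1:
  assumes g: "large_dim d"
  shows "0 < t1 d" "ell d / 16 \<le> t2a d - t1 d" "t2a d \<le> duration_const * ell d"
proof -
  interpret T: abc_trajectory d "lam d" rho eps "mu d" "a d" "b d" "c d"
    by (rule large_dim_trajectory[OF g])
  have ell: "1 \<le> ell d" "2 * ln 3 + 16 * t1_const \<le> ell d" using g by (auto simp: large_dim_def)
  have p: "0 < rho0 c0 d" using large_dim_rho0[OF g] by simp
  show "0 < t1 d" using T.hitting_times_bounds(1) .
  \<comment> \<open>\<open>(d - 2) c\<close> has to grow from \<open>(d - 2) mu \<le> rho0\<close> to \<open>1/3\<close> at rate at most 8\<close>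
  have "1/3 \<le> rho0 c0 d * exp (8 * t2a d)"
    using T.C_T2a_bounds(3) large_dim_mu_le(2)[OF g] by (smt (verit) exp_gt_zero mult_right_mono)
  then have "ln (1 / (3 * rho0 c0 d)) \<le> ln (exp (8 * t2a d))"
    using p by (intro ln_mono) (auto simp: field_simps)
  also have "ln (1 / (3 * rho0 c0 d)) = ell d - ln 3" using p by (simp add: ln_div ln_mult)
  finally have "ell d - ln 3 \<le> 8 * t2a d" by simp
  moreover have "t1 d \<le> t1_const"
    using T.hitting_times_bounds(2) large_dim_phase_bounds(1)[OF g] by simp
  ultimately show "ell d / 16 \<le> t2a d - t1 d" using ell(2) by simp
  have "t1_const \<le> t1_const * ell d" "phase3_const + ell d \<le> (phase3_const + 1) * ell d"
    using constants_nonneg ell(1) by (simp_all add: algebra_simps mult_le_cancel_left1)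
  then have "t1_const + (phase3_const + ell d) / (4 * eps) \<le> duration_const * ell d"
    using eps by (simp add: duration_const_def algebra_simps divide_right_mono add_mono)
  with large_dim_T2a_le[OF g] show "t2a d \<le> duration_const * ell d" by simp
qed

lemma large_dim_a_T2a:
  assumes g: "large_dim d"
  shows "mu d \<le> a d (t2a d)" "a d (t2a d) \<le> mu d * exp (24 * t2a d)" "a d (t2a d) \<le> a_bound d"
proof -
  interpret T: abc_trajectory d "lam d" rho eps "mu d" "a d" "b d" "c d"
    by (rule large_dim_trajectory[OF g])
  show "mu d \<le> a d (t2a d)" using T.a_T2a_bounds(1) .
  show "a d (t2a d) \<le> mu d * exp (24 * t2a d)" using T.a_T2a_bounds(2) .
  also have "\<dots> \<le> a_bound d" using mu_exp_le_a_bound[OF g large_dim_T2a_le[OF g]] .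
  finally show "a d (t2a d) \<le> a_bound d" .
qed

lemma large_dim_c_T2a:
  assumes g: "large_dim d"
  shows "2/3 - eps - a d (t2a d) \<le> (real d - 2) * c d (t2a d)" "1/3 \<le> (real d - 2) * c d (t2a d)"
    "1 / (3 * real d) \<le> c d (t2a d)" "c d (t2a d) \<le> 3 / real d"
proof -
  interpret T: abc_trajectory d "lam d" rho eps "mu d" "a d" "b d" "c d"
    by (rule large_dim_trajectory[OF g])
  have d: "3 \<le> real d" using T.d_ge_3 by simp
  show "2/3 - eps - a d (t2a d) \<le> (real d - 2) * c d (t2a d)" by (rule T.C_T2a_bounds(1))
  then show C: "1/3 \<le> (real d - 2) * c d (t2a d)" using T.a_T2a_bounds(3) eps by simp
  have c: "0 < c d (t2a d)" using T.pos_abc(3) T.hitting_times_bounds by simp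
  have "(real d - 2) * c d (t2a d) \<le> real d * c d (t2a d)"
    using c by (simp add: mult_right_mono)
  then show "1 / (3 * real d) \<le> c d (t2a d)" using C d by (simp add: field_simps)
  have "real d * c d (t2a d) \<le> 3 * ((real d - 2) * c d (t2a d))"
    using c d by (simp add: algebra_simps)
  also have "\<dots> \<le> 3" using T.C_T2a_bounds(2) eps by simp
  finally show "c d (t2a d) \<le> 3 / real d" using d by (simp add: field_simps)
qed

definition "a_exponent d = ln (a d (t2a d) / mu d) / ell d"

lemma large_dim_a_exponent:
  assumes g: "large_dim d"
  shows "0 \<le> a_exponent d" "a_exponent d \<le> 24 * duration_const"
proof -
  have ell: "1 \<le> ell d" using g by (simp add: large_dim_def)
  have mu: "0 < mu d" by (rule large_dim_mu_pos[OF g])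
  have ratio: "1 \<le> a d (t2a d) / mu d" "a d (t2a d) / mu d \<le> exp (24 * t2a d)"
    using large_dim_a_T2a(1,2)[OF g] mu by (simp_all add: field_simps)
  then show "0 \<le> a_exponent d" using ell by (simp add: a_exponent_def)
  have "ln (a d (t2a d) / mu d) \<le> ln (exp (24 * t2a d))" using ratio by (intro ln_mono) auto
  also have "\<dots> = 24 * t2a d" by simp
  also have "\<dots> \<le> 24 * duration_const * ell d" using large_dim_T2a_minus_T1(3)[OF g] by simp
  finally show "a_exponent d \<le> 24 * duration_const"
    using ell by (simp add: a_exponent_def field_simps)
qed

lemma eventually_hitting_sets_nonempty:
  "eventually (\<lambda>d. {t. 0 \<le> t \<and> rho \<le> rsum d (lam d) (a d t) (b d t) (c d t)} \<noteq> {}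
     \<and> {t. T1a d (lam d) rho (a d) (b d) (c d) \<le> t \<and> bdot d (lam d) (a d t) (b d t) (c d t) \<le> 0} \<noteq> {}
     \<and> {t. t1 d \<le> t \<and> 1 - eps \<le> rsum d (lam d) (a d t) (b d t) (c d t)} \<noteq> {}) at_top"
  using eventually_large_dim
  by eventually_elim (rule abc_trajectory.hitting_sets_nonempty[OF large_dim_trajectory])

lemma T2a_minus_T1_bigtheta: "(\<lambda>d. t2a d - t1 d) \<in> \<Theta>(ell)"
proof (rule bigthetaI'[of "1/16" duration_const])
  show "0 < duration_const" using constants_nonneg eps by (simp add: duration_const_def add_nonneg_pos)
  show "eventually (\<lambda>d. 1/16 * norm (ell d) \<le> norm (t2a d - t1 d)
      \<and> norm (t2a d - t1 d) \<le> duration_const * norm (ell d)) at_top"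
    using eventually_large_dim
  proof eventually_elim
    case (elim d)
    have "1 \<le> ell d" using elim by (simp add: large_dim_def)
    with large_dim_T2a_minus_T1[OF elim] show ?case by simp
  qed
qed simp

lemma ell_bigtheta: "ell \<in> \<Theta>(\<lambda>d. ln (ln (real d)))"
proof -
  have "ell \<in> \<Theta>(\<lambda>d. c0 * ln (ln (real d)))"
    by (rule bigthetaI_cong) (use eventually_ge_at_top[of 3] in \<open>eventually_elim, simp add: ell_eq\<close>)
  then show ?thesis using c0 by simp
qed

lemma eventually_C_T2a_ge: "eventually (\<lambda>d. 2/3 - eps - a d (t2a d) \<le> (real d - 2) * c d (t2a d)) at_top"
  using eventually_large_dim by eventually_elim (rule large_dim_c_T2a(1))

lemma a_T2a_bigo: "(\<lambda>d. a d (t2a d)) \<in> O(a_bound)"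
proof (rule bigoI[of _ 1])
  show "eventually (\<lambda>d. norm (a d (t2a d)) \<le> 1 * norm (a_bound d)) at_top"
    using eventually_large_dim
  proof eventually_elim
    case (elim d)
    have "0 < mu d" by (rule large_dim_mu_pos[OF elim])
    with large_dim_a_T2a[OF elim] show ?case by simp
  qed
qed

lemma a_bound_smallo: "a_bound \<in> o(\<lambda>_. 1)"
  unfolding a_bound_def by real_asymp

lemma a_T2a_smallo: "(\<lambda>d. a d (t2a d)) \<in> o(\<lambda>_. 1)"
  by (rule landau_o.big_small_trans[OF a_T2a_bigo a_bound_smallo])

lemma c_T2a_bigtheta: "(\<lambda>d. c d (t2a d)) \<in> \<Theta>(\<lambda>d. 1 / real d)"
proof (rule bigthetaI'[of "1/3" 3])
  show "eventually (\<lambda>d. 1/3 * norm (1 / real d) \<le> norm (c d (t2a d))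
      \<and> norm (c d (t2a d)) \<le> 3 * norm (1 / real d)) at_top"
    using eventually_large_dim
  proof eventually_elim
    case (elim d)
    have "0 < 1 / (3 * real d)" using elim by (simp add: large_dim_def)
    with large_dim_c_T2a(3,4)[OF elim] show ?case by simp
  qed
qed simp_all

lemma a_exponent_bigo: "a_exponent \<in> O(\<lambda>_. 1)"
proof (rule bigoI[of _ "24 * duration_const"])
  show "eventually (\<lambda>d. norm (a_exponent d) \<le> 24 * duration_const * norm (1::real)) at_top"
    using eventually_large_dim by eventually_elim (use large_dim_a_exponent in force)
qed

lemma eventually_a_T2a_eq_powr:
  "eventually (\<lambda>d. a d (t2a d) = mu d * rho0 c0 d powr (- a_exponent d)) at_top"
  using eventually_large_dim
proof eventually_elim
  case (elim d)
  have mu: "0 < mu d" by (rule large_dim_mu_pos[OF elim])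
  then have "0 < a d (t2a d)" using large_dim_a_T2a(1)[OF elim] by simp
  moreover note mu
  moreover have "0 < rho0 c0 d" "rho0 c0 d \<noteq> 1" using large_dim_rho0[OF elim] rho by auto
  ultimately show ?case unfolding a_exponent_def by (rule eq_mult_powr_log_ratio)
qed

lemma a_T2a_eq_mu0_rho0_powr:
  "\<exists>h::nat \<Rightarrow> real. h \<in> O(\<lambda>_. 1)
     \<and> eventually (\<lambda>d. a d (t2a d) = mu d * rho0 c0 d powr (- h d)) at_top"
  using a_exponent_bigo eventually_a_T2a_eq_powr by blast

lemma a_T2a_eq_ln_powr:
  "\<exists>h::nat \<Rightarrow> real. h \<in> O(\<lambda>_. 1)
     \<and> eventually (\<lambda>d. a d (t2a d) = ln (real d) powr (h d) / (real d + lam d)) at_top"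
proof (intro exI conjI)
  have "(\<lambda>d. a_exponent d - 1) \<in> O(\<lambda>_. 1)" using sum_in_bigo(2)[OF a_exponent_bigo] by simp
  then show "(\<lambda>d. c0 * (a_exponent d - 1)) \<in> O(\<lambda>_. 1)" using c0 by simp
  show "eventually (\<lambda>d. a d (t2a d)
      = ln (real d) powr (c0 * (a_exponent d - 1)) / (real d + lam d)) at_top"
    using eventually_a_T2a_eq_powr by eventually_elim (simp add: mu0_mult_rho0_powr)
qed

lemma align_T2a_bigo:
  "(\<lambda>d. align d (a d (t2a d)) (b d (t2a d)) (c d (t2a d))) \<in> O(\<lambda>d. sqrt (real d) * a d (t2a d))"
proof (rule bigoI[of _ 3])
  show "eventually (\<lambda>d. norm (align d (a d (t2a d)) (b d (t2a d)) (c d (t2a d)))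
      \<le> 3 * norm (sqrt (real d) * a d (t2a d))) at_top"
    using eventually_large_dim
  proof eventually_elim
    case (elim d)
    have "0 < mu d" by (rule large_dim_mu_pos[OF elim])
    then have "0 \<le> a d (t2a d)" using large_dim_a_T2a(1)[OF elim] by simp
    moreover have "3 \<le> d" using elim by (simp add: large_dim_def)
    note align_le_sqrt_mult[OF this calculation large_dim_c_T2a(2)[OF elim], where y = "b d (t2a d)"]
    with \<open>0 \<le> a d (t2a d)\<close> show ?case by (simp add: abs_mult mult.assoc)
  qed
qed

lemma align_T2a_smallo: "(\<lambda>d. align d (a d (t2a d)) (b d (t2a d)) (c d (t2a d))) \<in> o(\<lambda>_. 1)"
proof -
  have "(\<lambda>d. sqrt (real d) * a d (t2a d)) \<in> O(\<lambda>d. sqrt (real d) * a_bound d)"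
    by (rule landau_o.big.mult[OF landau_o.big_refl a_T2a_bigo])
  moreover have "(\<lambda>d. sqrt (real d) * a_bound d) \<in> o(\<lambda>_. 1)"
    unfolding a_bound_def by real_asymp
  ultimately show ?thesis
    using align_T2a_bigo by (blast intro: landau_o.big_trans landau_o.big_small_trans)
qed

end

theorem propositionB5:
  fixes lam :: "nat \<Rightarrow> real" and c0 rho eps :: real
    and a b c :: "nat \<Rightarrow> real \<Rightarrow> real"
  assumes c0: "0 < c0"
      and rho: "0 < rho" "rho < 1/12"
      and eps: "0 < eps" "eps \<le> 1/4"
      and lam_pos: "\<forall>d\<ge>3. 0 < lam d"
      and lam_range: "\<exists>K1>0. \<exists>K2>0. eventually (\<lambda>d. K1 * ln (real d) \<le> lam d \<and> lam d \<le> K2 * real d) at_top"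
      and ode: "\<forall>d\<ge>3. \<forall>t\<ge>0.
           (a d has_real_derivative adot d (lam d) (a d t) (b d t) (c d t)) (at t within {0..}) \<and>
           (b d has_real_derivative bdot d (lam d) (a d t) (b d t) (c d t)) (at t within {0..}) \<and>
           (c d has_real_derivative cdot d (lam d) (a d t) (b d t) (c d t)) (at t within {0..})"
      and init: "\<forall>d\<ge>3. a d 0 = mu0 c0 (lam d) d \<and> b d 0 = mu0 c0 (lam d) d \<and> c d 0 = mu0 c0 (lam d) d"
  shows
    "eventually (\<lambda>d. {t. 0 \<le> t \<and> rho \<le> rsum d (lam d) (a d t) (b d t) (c d t)} \<noteq> {}
        \<and> {t. T1a d (lam d) rho (a d) (b d) (c d) \<le> t \<and> bdot d (lam d) (a d t) (b d t) (c d t) \<le> 0} \<noteq> {}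
        \<and> {t. T1 d (lam d) rho (a d) (b d) (c d) \<le> t \<and> 1 - eps \<le> rsum d (lam d) (a d t) (b d t) (c d t)} \<noteq> {}) at_top
   \<and> (\<lambda>d. T2a d (lam d) rho eps (a d) (b d) (c d) - T1 d (lam d) rho (a d) (b d) (c d)) \<in> \<Theta>(\<lambda>d. ln (1 / rho0 c0 d))
   \<and> (\<lambda>d. T2a d (lam d) rho eps (a d) (b d) (c d) - T1 d (lam d) rho (a d) (b d) (c d)) \<in> \<Theta>(\<lambda>d. ln (ln (real d)))
   \<and> (\<exists>g::nat \<Rightarrow> real. g \<in> o(\<lambda>_. 1) \<and>
        eventually (\<lambda>d. 2/3 - eps - g d \<le> (real d - 2) * c d (T2a d (lam d) rho eps (a d) (b d) (c d))) at_top)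
   \<and> (\<lambda>d. c d (T2a d (lam d) rho eps (a d) (b d) (c d))) \<in> \<Theta>(\<lambda>d. 1 / real d)
   \<and> (\<exists>h::nat \<Rightarrow> real. h \<in> O(\<lambda>_. 1) \<and>
        eventually (\<lambda>d. a d (T2a d (lam d) rho eps (a d) (b d) (c d)) = mu0 c0 (lam d) d * rho0 c0 d powr (- h d)) at_top)
   \<and> (\<exists>h::nat \<Rightarrow> real. h \<in> O(\<lambda>_. 1) \<and>
        eventually (\<lambda>d. a d (T2a d (lam d) rho eps (a d) (b d) (c d)) = ln (real d) powr (h d) / (real d + lam d)) at_top)
   \<and> (\<lambda>d. a d (T2a d (lam d) rho eps (a d) (b d) (c d))) \<in> o(\<lambda>_. 1)
   \<and> (\<lambda>d. align d (a d (T2a d (lam d) rho eps (a d) (b d) (c d))) (b d (T2a d (lam d) rho eps (a d) (b d) (c d))) (c d (T2a d (lam d) rho eps (a d) (b d) (c d))))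
        \<in> O(\<lambda>d. sqrt (real d) * a d (T2a d (lam d) rho eps (a d) (b d) (c d)))
   \<and> (\<lambda>d. align d (a d (T2a d (lam d) rho eps (a d) (b d) (c d))) (b d (T2a d (lam d) rho eps (a d) (b d) (c d))) (c d (T2a d (lam d) rho eps (a d) (b d) (c d)))) \<in> o(\<lambda>_. 1)"
proof -
  obtain K1 K2 where K: "0 < K1" "0 < K2"
    and lam_bounds: "eventually (\<lambda>d. K1 * ln (real d) \<le> lam d \<and> lam d \<le> K2 * real d) at_top"
    using lam_range by blast
  interpret abc_trajectory_family lam c0 rho eps K1 K2 a b c
    using c0 rho eps K lam_bounds ode init by unfold_locales
  have "\<exists>g::nat \<Rightarrow> real. g \<in> o(\<lambda>_. 1) \<and>
      eventually (\<lambda>d. 2/3 - eps - g d \<le> (real d - 2) * c d (t2a d)) at_top"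
    using a_T2a_smallo eventually_C_T2a_ge by blast
  then show ?thesis
    using eventually_hitting_sets_nonempty T2a_minus_T1_bigtheta
      landau_theta.trans[OF T2a_minus_T1_bigtheta ell_bigtheta] c_T2a_bigtheta
      a_T2a_eq_mu0_rho0_powr a_T2a_eq_ln_powr a_T2a_smallo align_T2a_bigo align_T2a_smallo
    by blast
qed

end
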